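(* Let $n\ge1$, $m\ge1$, $1\le j\le n$, and let $\Delta$ be the Newton polytope of $K^j_{n,m}=x_1^m+\dots+x_n^m+(x_1\cdots x_j)^{-1}$. For $0\le k\le nm$, $$W_\Delta(k)=\binom{n-1+k}{n-1}+\sum_{s=1}^j\beta(j,s)\sum_{\ell=1}^n\binom{k-\ell m+(n-j-1)}{n-s-1}+\alpha(j,k),$$ where $\beta(j,s)=\binom js$ except that $\beta(n,n)=0$; $\alpha(j,k)=0$ unless $j=n$ and $k$ is a positive multiple of $m$, in which case $\alpha(j,k)=1$; and binomial coefficients follow the convention $\binom ab=0$ whenever $a<b$ (in particular whenever $a<0$).
   Context: The Newton polytope $\Delta$ is the convex hull of $\vec0$, $-(e_1+\dots+e_j)$, and $me_1,\dots,me_n$; its denominator is $D(\Delta)=m$. The weight $w(u)$ of $u\in\mathbb{Q}^n$ is the least $c\in\mathbb Q_{\ge0}$ with $u\in c\Delta$ ($\infty$ if none), and $W_\Delta(k)=\#\{u\in\mathbb Z^n:w(u)=k/m\}$. *)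

theory Defs
  imports Complex_Main
begin

text \<open>Points of Q^n / R^n are modelled as functions nat => real, coordinate i
  (0-based, i < n) corresponding to the paper's coordinate x_(i+1); coordinates
  i >= n are 0.\<close>

definition delta_vertices :: "nat \<Rightarrow> nat \<Rightarrow> nat \<Rightarrow> (nat \<Rightarrow> real) set" where
  "delta_vertices n j m =
     {(\<lambda>_. 0), (\<lambda>i. if i < j then -1 else 0)} \<union>
     {(\<lambda>i. if i = k then real m else 0) | k. k < n}"

text \<open>x lies in c * Delta, where Delta is the convex hull of the vertices
  (for c >= 0 this is the set of nonnegative combinations with total weight c).\<close>
definition in_scaled_delta :: "nat \<Rightarrow> nat \<Rightarrow> nat \<Rightarrow> real \<Rightarrow> (nat \<Rightarrow> real) \<Rightarrow> bool" where
  "in_scaled_delta n j m c x \<longleftrightarrow>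
     (\<exists>\<mu> :: (nat \<Rightarrow> real) \<Rightarrow> real.
        (\<forall>v\<in>delta_vertices n j m. \<mu> v \<ge> 0) \<and>
        (\<Sum>v\<in>delta_vertices n j m. \<mu> v) = c \<and>
        x = (\<lambda>i. \<Sum>v\<in>delta_vertices n j m. \<mu> v * v i))"

definition has_weight :: "nat \<Rightarrow> nat \<Rightarrow> nat \<Rightarrow> (nat \<Rightarrow> real) \<Rightarrow> real \<Rightarrow> bool" where
  "has_weight n j m x c \<longleftrightarrow>
     c \<in> \<rat> \<and> c \<ge> 0 \<and> in_scaled_delta n j m c x \<and>
     (\<forall>c'. c' \<in> \<rat> \<and> c' \<ge> 0 \<and> in_scaled_delta n j m c' x \<longrightarrow> c \<le> c')"

definition W_Delta :: "nat \<Rightarrow> nat \<Rightarrow> nat \<Rightarrow> nat \<Rightarrow> nat" where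
  "W_Delta n j m k =
     card {u :: nat \<Rightarrow> int. (\<forall>i\<ge>n. u i = 0) \<and>
                has_weight n j m (\<lambda>i. of_int (u i)) (real k / real m)}"

definition binom :: "int \<Rightarrow> int \<Rightarrow> int" where
  "binom a b = (if a < b \<or> b < 0 then 0 else int (nat a choose nat b))"

definition beta :: "nat \<Rightarrow> nat \<Rightarrow> nat \<Rightarrow> int" where
  "beta n j s = (if j = n \<and> s = n then 0 else int (j choose s))"

definition alpha :: "nat \<Rightarrow> nat \<Rightarrow> nat \<Rightarrow> nat \<Rightarrow> int" where
  "alpha n m j k = (if j = n \<and> k > 0 \<and> m dvd k then 1 else 0)"

end

theory Submission
  imports Defs
begin

(* A point x lies in c*Delta iff x_i >= 0 for j <= i < n and there is A >= 0 (the coefficient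
   of the vertex -(e_1+...+e_j)) with x_i + A >= 0 for i < j and c >= (sum x + (m+j) A)/m.
   The optimal A for a lattice point u is its depth a(u) = max 0 (- min_{i<j} u_i), so u has
   weight k/m iff u_i >= 0 for j <= i < n and sum u + (m+j) a(u) = k.  As k <= nm forces
   a(u) <= n, the counted set is the disjoint union of the level sets a(u) = a, 0 <= a <= n.
   Level 0 is the set of lattice points of a simplex {u >= 0, sum u = k}; a level a >= 1 is
   the difference of two such sets with lower bounds -a resp. 1-a on the first j coordinates.
   Stars and bars counts these, and Vandermonde's identity rewrites the difference as the inner
   sum over s, plus 1 exactly when j = n and k = a m; summing over a gives the formula. *)


section \<open>Lattice points in a simplex\<close>

definition compositions :: "nat set \<Rightarrow> nat \<Rightarrow> (nat \<Rightarrow> nat) set" where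
  "compositions I t = {v. (\<forall>i. i \<notin> I \<longrightarrow> v i = 0) \<and> sum v I = t}"

lemma compositions_insert:
  assumes "finite I" "x \<notin> I"
  shows "compositions (insert x I) t = (\<Union>r\<in>{..t}. (\<lambda>v. v(x:=r)) ` compositions I (t - r))"
proof
  show "compositions (insert x I) t \<subseteq> (\<Union>r\<in>{..t}. (\<lambda>v. v(x:=r)) ` compositions I (t - r))"
  proof
    fix w assume w: "w \<in> compositions (insert x I) t"
    have s: "sum w I = sum (w(x:=0)) I" using assms by (intro sum.cong) auto
    have wx: "w x + sum w I = t" using w assms by (simp add: compositions_def)
    hence "w(x:=0) \<in> compositions I (t - w x)" using w s assms by (auto simp: compositions_def)
    moreover have "w = (w(x:=0))(x := w x)" by simp
    moreover have "w x \<in> {..t}" using wx by simp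
    ultimately show "w \<in> (\<Union>r\<in>{..t}. (\<lambda>v. v(x:=r)) ` compositions I (t - r))" by blast
  qed
next
  show "(\<Union>r\<in>{..t}. (\<lambda>v. v(x:=r)) ` compositions I (t - r)) \<subseteq> compositions (insert x I) t"
  proof
    fix w assume "w \<in> (\<Union>r\<in>{..t}. (\<lambda>v. v(x:=r)) ` compositions I (t - r))"
    then obtain r v where r: "r \<in> {..t}" and v: "v \<in> compositions I (t - r)" and w: "w = v(x:=r)"
      by blast
    have "sum (v(x:=r)) I = sum v I" using assms by (intro sum.cong) auto
    then show "w \<in> compositions (insert x I) t" using v r assms w by (auto simp: compositions_def)
  qed
qed

lemma compositions_count:
  "finite I \<Longrightarrow> finite (compositions I t) \<and>
     card (compositions I t) =
       (if I = {} then (if t = 0 then 1 else 0) else (t + card I - 1) choose t)"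
proof (induction I arbitrary: t rule: finite_induct)
  case empty
  have "compositions {} t = (if t = 0 then {\<lambda>_. 0} else {})" by (auto simp: compositions_def)
  then show ?case by simp
next
  case (insert x I)
  note split = compositions_insert[OF insert(1,2)]
  have inj: "inj_on (\<lambda>v. v(x:=r)) (compositions I s)" for r s
  proof (rule inj_onI)
    fix v w assume h: "v \<in> compositions I s" "w \<in> compositions I s" "v(x:=r) = w(x:=r)"
    show "v = w"
    proof
      fix i show "v i = w i"
        using fun_cong[OF h(3), of i] h(1,2) insert(2) unfolding compositions_def
        by (cases "i = x") auto
    qed
  qed
  have disj: "\<forall>r\<in>{..t}. \<forall>r'\<in>{..t}. r \<noteq> r' \<longrightarrow>
      (\<lambda>v. v(x:=r)) ` compositions I (t - r) \<inter> (\<lambda>v. v(x:=r')) ` compositions I (t - r') = {}"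
    by (fastforce dest: fun_cong[where x=x])
  have fin: "finite (compositions (insert x I) t)" unfolding split using insert(3) by auto
  have "card (compositions (insert x I) t) =
      (\<Sum>r\<le>t. card ((\<lambda>v. v(x:=r)) ` compositions I (t - r)))"
    unfolding split using insert(3) disj by (intro card_UN_disjoint) auto
  also have "\<dots> = (\<Sum>r\<le>t. card (compositions I (t - r)))"
    using inj by (intro sum.cong refl card_image)
  also have "\<dots> = (t + card (insert x I) - 1) choose t"
  proof (cases "I = {}")
    case True
    then show ?thesis using insert(3) by simp
  next
    case False
    have cI: "card I > 0" using False insert(1) by (simp add: card_gt_0_iff)
    have "(\<Sum>r\<le>t. card (compositions I (t - r))) = (\<Sum>r\<le>t. (t - r + card I - 1) choose (t - r))"
      using insert(3) False by simp
    also have "\<dots> = (\<Sum>q\<le>t. (card I - 1 + q) choose q)"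
      using cI by (intro sum.reindex_bij_witness[where i="\<lambda>q. t - q" and j="\<lambda>r. t - r"])
        (auto simp: add.commute Suc_diff_le)
    also have "\<dots> = Suc (card I - 1 + t) choose t" by (rule sum_choose_lower)
    also have "\<dots> = (t + card (insert x I) - 1) choose t" using cI insert(1,2) by (simp add: add.commute)
    finally show ?thesis .
  qed
  finally show ?case using fin by simp
qed

definition lattice_points :: "nat set \<Rightarrow> (nat \<Rightarrow> int) \<Rightarrow> int \<Rightarrow> (nat \<Rightarrow> int) set" where
  "lattice_points I lo t =
     {u. (\<forall>i. i \<notin> I \<longrightarrow> u i = 0) \<and> (\<forall>i\<in>I. lo i \<le> u i) \<and> sum u I = t}"

lemma binom_of_nat: "binom (int a) (int b) = int (a choose b)"
  by (simp add: binom_def)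

text \<open>Shifting by lo reduces to compositions of t - sum lo; the count is a binomial coefficient
  which, with the convention for binom, vanishes when t < sum lo.\<close>
lemma lattice_points_count:
  assumes I: "finite I" "I \<noteq> {}"
  shows "finite (lattice_points I lo t) \<and>
     int (card (lattice_points I lo t)) =
       binom (t - sum lo I + int (card I) - 1) (int (card I) - 1)"
proof (cases "t < sum lo I")
  case True
  have "lattice_points I lo t = {}"
  proof (rule ccontr)
    assume "lattice_points I lo t \<noteq> {}"
    then obtain u where u: "u \<in> lattice_points I lo t" by blast
    hence "sum lo I \<le> sum u I" by (intro sum_mono) (auto simp: lattice_points_def)
    thus False using u True by (auto simp: lattice_points_def)
  qed
  then show ?thesis using True by (simp add: binom_def)
next
  case False
  define D where "D = nat (t - sum lo I)"
  have D: "int D = t - sum lo I" using False by (simp add: D_def)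
  define shift where "shift v i = (if i \<in> I then lo i + int (v i) else 0)" for v :: "nat \<Rightarrow> nat" and i
  define unshift where "unshift u i = (if i \<in> I then nat (u i - lo i) else 0)" for u :: "nat \<Rightarrow> int" and i
  have eq: "lattice_points I lo t = shift ` compositions I D"
  proof
    show "lattice_points I lo t \<subseteq> shift ` compositions I D"
    proof
      fix u assume u: "u \<in> lattice_points I lo t"
      have "int (sum (unshift u) I) = (\<Sum>i\<in>I. u i - lo i)"
        unfolding of_nat_sum using u by (intro sum.cong) (auto simp: unshift_def lattice_points_def)
      also have "\<dots> = int D" using u D by (simp add: sum_subtractf lattice_points_def)
      finally have "sum (unshift u) I = D" by (simp only: of_nat_eq_iff)
      hence "unshift u \<in> compositions I D" by (auto simp: compositions_def unshift_def)
      moreover have "u = shift (unshift u)"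
        using u by (auto simp: shift_def unshift_def lattice_points_def)
      ultimately show "u \<in> shift ` compositions I D" by blast
    qed
  next
    show "shift ` compositions I D \<subseteq> lattice_points I lo t"
    proof
      fix u assume "u \<in> shift ` compositions I D"
      then obtain v where v: "v \<in> compositions I D" and u: "u = shift v" by blast
      have "sum u I = (\<Sum>i\<in>I. lo i + int (v i))" unfolding u shift_def by (intro sum.cong) auto
      also have "\<dots> = sum lo I + int (sum v I)" by (simp add: sum.distrib of_nat_sum)
      also have "\<dots> = t" using v D by (simp add: compositions_def)
      finally show "u \<in> lattice_points I lo t" by (auto simp: lattice_points_def u shift_def)
    qed
  qed
  have inj: "inj_on shift (compositions I D)"
  proof (rule inj_onI)
    fix v w assume h: "v \<in> compositions I D" "w \<in> compositions I D" "shift v = shift w"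
    show "v = w"
    proof
      fix i show "v i = w i"
        using fun_cong[OF h(3), of i] h(1,2) unfolding compositions_def shift_def
        by (cases "i \<in> I") auto
    qed
  qed
  have cI: "card I > 0" using I by (simp add: card_gt_0_iff)
  have cc: "finite (compositions I D)" "card (compositions I D) = (D + card I - 1) choose D"
    using compositions_count[OF I(1), of D] I(2) by simp_all
  have "card (lattice_points I lo t) = (D + card I - 1) choose D"
    using eq cc inj by (simp add: card_image)
  also have "\<dots> = (D + card I - 1) choose (card I - 1)"
    using binomial_symmetric[of D "D + card I - 1"] cI by simp
  finally have "int (card (lattice_points I lo t)) = binom (int (D + card I - 1)) (int (card I - 1))"
    by (simp only: binom_of_nat)
  also have "int (D + card I - 1) = t - sum lo I + int (card I) - 1" using D cI by linarith
  also have "int (card I - 1) = int (card I) - 1" using cI by linarith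
  finally show ?thesis using eq cc by simp
qed


section \<open>A binomial identity\<close>

text \<open>Vandermonde's identity in the form needed for the positive levels:
  C(T+n-1, n-1) - C(T-j+n-1, n-1) equals the sum over s of beta(j,s) C(T+n-j-1, n-s-1), up to
  the correction 1 in the degenerate case j = n, T = 0 (where beta(n,n) = 0 drops a term).\<close>
lemma binom_difference_vandermonde:
  fixes n j :: nat and T :: int
  assumes n: "n \<ge> 1" and j: "1 \<le> j" "j \<le> n"
  shows "binom (T + int n - 1) (int n - 1) - binom (T - int j + int n - 1) (int n - 1) =
     (\<Sum>s=1..j. beta n j s * binom (T + (int n - int j - 1)) (int n - int s - 1))
     + (if j = n \<and> T = 0 then 1 else 0)"
proof (cases "T < 0")
  case True
  then show ?thesis by (simp add: binom_def)
next
  case T: False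
  show ?thesis
  proof (cases "j = n \<and> T = 0")
    case True
    have "binom (- 1) b = 0" for b by (simp add: binom_def, linarith)
    moreover have "binom (int n - 1) (int n - 1) = 1" using n by (simp add: binom_def)
    ultimately show ?thesis using True by simp
  next
    case nondeg: False
    define N where "N = nat (T + (int n - int j - 1))"
    define r where "r = n - 1"
    have N: "T + (int n - int j - 1) = int N" using T nondeg j unfolding N_def by linarith
    have r: "int n - 1 = int r" using n r_def by simp
    define h where "h s = (if s \<le> r then int ((j choose s) * (N choose (r - s))) else 0)" for s
    have "binom (T + int n - 1) (int n - 1) = int ((j + N) choose r)"
      using N r binom_of_nat[of "j + N" r] by (simp add: algebra_simps)
    also have "\<dots> = int (N choose r) + (\<Sum>s=1..r. h s)"
    proof -
      have "{..r} = insert 0 {1..r}" by auto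
      then show ?thesis using vandermonde[of j N r] by (simp add: h_def of_nat_sum flip: vandermonde)
    qed
    also have "(\<Sum>s=1..r. h s) = (\<Sum>s=1..j. h s)"
    proof -
      have "(\<Sum>s=1..r. h s) = (\<Sum>s=1..n. h s)"
        by (rule sum.mono_neutral_left) (auto simp: h_def r_def)
      also have "\<dots> = (\<Sum>s=1..j. h s)"
        using j by (intro sum.mono_neutral_right) (auto simp: h_def)
      finally show ?thesis .
    qed
    also have "\<dots> = (\<Sum>s=1..j. beta n j s * binom (T + (int n - int j - 1)) (int n - int s - 1))"
    proof (intro sum.cong refl)
      fix s assume s: "s \<in> {1..j}"
      show "h s = beta n j s * binom (T + (int n - int j - 1)) (int n - int s - 1)"
      proof (cases "s \<le> r")
        case True
        have "beta n j s = int (j choose s)" using True n r_def by (auto simp: beta_def)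
        moreover have "int n - int s - 1 = int (r - s)" using True n r_def by simp
        ultimately show ?thesis using N True by (simp only: h_def binom_of_nat) simp
      next
        case False
        then have "int n - int s - 1 < 0" using r_def by simp
        then show ?thesis using False by (simp add: h_def binom_def)
      qed
    qed
    finally show ?thesis
      using N r nondeg binom_of_nat[of N r] by (simp add: algebra_simps)
  qed
qed


section \<open>The polytope Delta and its dilates\<close>

definition origin_vertex :: "nat \<Rightarrow> real" where
  "origin_vertex = (\<lambda>_. 0)"
definition neg_vertex :: "nat \<Rightarrow> nat \<Rightarrow> real" where
  "neg_vertex j = (\<lambda>i. if i < j then -1 else 0)"
definition axis_vertex :: "nat \<Rightarrow> nat \<Rightarrow> nat \<Rightarrow> real" where
  "axis_vertex m k = (\<lambda>i. if i = k then real m else 0)"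

lemma delta_vertices_eq:
  "delta_vertices n j m = insert origin_vertex (insert (neg_vertex j) (axis_vertex m ` {..<n}))"
  unfolding delta_vertices_def origin_vertex_def neg_vertex_def axis_vertex_def by auto

lemma delta_vertices_distinct:
  assumes "m \<ge> 1" "j \<ge> 1"
  shows "origin_vertex \<noteq> neg_vertex j" "origin_vertex \<noteq> axis_vertex m k"
    "neg_vertex j \<noteq> axis_vertex m k" "axis_vertex m k = axis_vertex m k' \<longleftrightarrow> k = k'"
proof -
  show "origin_vertex \<noteq> neg_vertex j"
  proof
    assume "origin_vertex = neg_vertex j"
    then have "origin_vertex 0 = neg_vertex j 0" by simp
    then show False using assms by (simp add: origin_vertex_def neg_vertex_def)
  qed
  show "origin_vertex \<noteq> axis_vertex m k"
  proof
    assume "origin_vertex = axis_vertex m k"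
    then have "origin_vertex k = axis_vertex m k k" by simp
    then show False using assms by (simp add: origin_vertex_def axis_vertex_def)
  qed
  show "neg_vertex j \<noteq> axis_vertex m k"
  proof
    assume "neg_vertex j = axis_vertex m k"
    then have "neg_vertex j 0 = axis_vertex m k 0" by simp
    then show False using assms by (auto simp: neg_vertex_def axis_vertex_def split: if_splits)
  qed
  show "axis_vertex m k = axis_vertex m k' \<longleftrightarrow> k = k'"
  proof
    assume "axis_vertex m k = axis_vertex m k'"
    then have "axis_vertex m k k = axis_vertex m k' k" by simp
    then show "k = k'" using assms by (auto simp: axis_vertex_def split: if_splits)
  qed simp
qed

lemma sum_delta_vertices:
  assumes "m \<ge> 1" "j \<ge> 1"
  shows "(\<Sum>v\<in>delta_vertices n j m. f v) =
           f origin_vertex + f (neg_vertex j) + (\<Sum>k<n. f (axis_vertex m k))"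
proof -
  note distinct = delta_vertices_distinct[OF assms]
  have "origin_vertex \<notin> insert (neg_vertex j) (axis_vertex m ` {..<n})"
    using distinct(1,2) by auto
  moreover have "neg_vertex j \<notin> axis_vertex m ` {..<n}" using distinct(3) by auto
  moreover have "inj_on (axis_vertex m) {..<n}" using distinct(4) by (auto intro: inj_onI)
  ultimately show ?thesis unfolding delta_vertices_eq by (simp add: sum.reindex add.assoc)
qed

lemma sum_prefix_const:
  fixes c :: "'a :: semiring_1"
  assumes "j \<le> n"
  shows "(\<Sum>i<n. if i < j then c else 0) = of_nat j * c"
proof -
  have "{..<n} \<inter> {i. i < j} = {..<j}" using assms by auto
  then show ?thesis by (simp add: sum.If_cases)
qed

lemma combination_coordinate:
  assumes "m \<ge> 1" "j \<ge> 1"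
  shows "(\<Sum>v\<in>delta_vertices n j m. \<mu> v * v i) =
     (if i < j then - \<mu> (neg_vertex j) else 0) + (if i < n then \<mu> (axis_vertex m i) * real m else 0)"
proof -
  have "(\<Sum>k<n. \<mu> (axis_vertex m k) * axis_vertex m k i) =
        (\<Sum>k<n. if i = k then \<mu> (axis_vertex m k) * real m else 0)"
    by (intro sum.cong) (auto simp: axis_vertex_def)
  also have "\<dots> = (if i < n then \<mu> (axis_vertex m i) * real m else 0)" by (simp add: sum.delta)
  finally show ?thesis
    using sum_delta_vertices[OF assms, of "\<lambda>v. \<mu> v * v i"]
    by (simp add: origin_vertex_def neg_vertex_def)
qed

lemma in_scaled_delta_nonneg: "in_scaled_delta n j m c x \<Longrightarrow> c \<ge> 0"
  unfolding in_scaled_delta_def by (auto intro: sum_nonneg)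

lemma in_scaled_delta_necessary:
  assumes m: "m \<ge> 1" and j: "1 \<le> j" "j \<le> n" and x: "in_scaled_delta n j m c x"
  shows "\<exists>A\<ge>0. (\<forall>i<j. x i + A \<ge> 0) \<and> (\<forall>i. j \<le> i \<and> i < n \<longrightarrow> x i \<ge> 0) \<and>
           c \<ge> ((\<Sum>i<n. x i) + real (m + j) * A) / real m"
proof -
  obtain \<mu> where nn: "\<forall>v\<in>delta_vertices n j m. \<mu> v \<ge> 0"
    and sc: "(\<Sum>v\<in>delta_vertices n j m. \<mu> v) = c"
    and xe: "x = (\<lambda>i. \<Sum>v\<in>delta_vertices n j m. \<mu> v * v i)"
    using x unfolding in_scaled_delta_def by blast
  define A where "A = \<mu> (neg_vertex j)"
  have xi: "x i = (if i < j then - A else 0) + (if i < n then \<mu> (axis_vertex m i) * real m else 0)"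
    for i unfolding xe A_def using combination_coordinate[OF m j(1)] by simp
  have A0: "A \<ge> 0" using nn by (simp add: A_def delta_vertices_eq)
  have B0: "\<mu> (axis_vertex m i) \<ge> 0" if "i < n" for i using nn that by (simp add: delta_vertices_eq)
  have Z0: "\<mu> origin_vertex \<ge> 0" using nn by (simp add: delta_vertices_eq)
  have c_eq: "c = \<mu> origin_vertex + A + (\<Sum>k<n. \<mu> (axis_vertex m k))"
    using sc sum_delta_vertices[OF m j(1), of \<mu>] by (simp add: A_def)
  have "(\<Sum>i<n. x i) = (\<Sum>i<n. (if i < j then - A else 0)) + (\<Sum>i<n. \<mu> (axis_vertex m i) * real m)"
    unfolding xi by (simp add: sum.distrib)
  also have "\<dots> = - (real j * A) + real m * (\<Sum>i<n. \<mu> (axis_vertex m i))"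
    using sum_prefix_const[OF j(2), of "-A"] by (simp add: sum_distrib_left mult.commute)
  finally have "((\<Sum>i<n. x i) + real (m + j) * A) / real m = A + (\<Sum>i<n. \<mu> (axis_vertex m i))"
    using m by (simp add: field_simps)
  also have "\<dots> \<le> c" using c_eq Z0 by simp
  finally show ?thesis using A0 B0 j(2) by (auto simp: xi)
qed

text \<open>Conversely, those conditions (with x supported on the first n coordinates) put x into
  ((sum x + (m+j) A)/m) Delta: use coefficient A on -(e_1+...+e_j) and complete the coordinates
  with the axis vertices.\<close>
lemma in_scaled_delta_sufficient:
  assumes m: "m \<ge> 1" and j: "1 \<le> j" "j \<le> n" and A0: "A \<ge> 0"
    and low: "\<forall>i<j. x i + A \<ge> 0" and nonneg: "\<forall>i. j \<le> i \<and> i < n \<longrightarrow> x i \<ge> 0"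
    and supp: "\<forall>i\<ge>n. x i = 0"
  shows "in_scaled_delta n j m (((\<Sum>i<n. x i) + real (m + j) * A) / real m) x"
proof -
  note distinct = delta_vertices_distinct[OF m j(1)]
  define \<mu> where "\<mu> v = (if v = neg_vertex j then A else if v = origin_vertex then 0 else
      (\<Sum>k<n. if v = axis_vertex m k then (x k + (if k < j then A else 0)) / real m else 0))" for v
  have mpos: "real m > 0" using m by simp
  have muJ: "\<mu> (neg_vertex j) = A" by (simp add: \<mu>_def)
  have muZ: "\<mu> origin_vertex = 0" using distinct(1) by (simp add: \<mu>_def)
  have muE: "\<mu> (axis_vertex m i) = (x i + (if i < j then A else 0)) / real m" if "i < n" for i
  proof -
    have "\<mu> (axis_vertex m i) =
        (\<Sum>k<n. if i = k then (x k + (if k < j then A else 0)) / real m else 0)"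
      using distinct(2)[symmetric] distinct(3)[symmetric] distinct(4) unfolding \<mu>_def by simp
    also have "\<dots> = (x i + (if i < j then A else 0)) / real m" using that by (simp add: sum.delta)
    finally show ?thesis .
  qed
  have nn: "\<forall>v\<in>delta_vertices n j m. \<mu> v \<ge> 0"
  proof
    fix v assume "v \<in> delta_vertices n j m"
    then consider "v = origin_vertex" | "v = neg_vertex j" | k where "k < n" "v = axis_vertex m k"
      unfolding delta_vertices_eq by auto
    then show "\<mu> v \<ge> 0"
    proof cases
      case (3 k)
      have "x k + (if k < j then A else 0) \<ge> 0" using low nonneg 3 by auto
      then show ?thesis using 3 muE mpos by simp
    qed (use muZ muJ A0 in simp_all)
  qed
  have "(\<Sum>v\<in>delta_vertices n j m. \<mu> v) = A + (\<Sum>k<n. (x k + (if k < j then A else 0)) / real m)"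
    using sum_delta_vertices[OF m j(1), of \<mu>] muJ muZ muE by simp
  also have "(\<Sum>k<n. (x k + (if k < j then A else 0)) / real m) = ((\<Sum>k<n. x k) + real j * A) / real m"
    using sum_prefix_const[OF j(2), of A] by (simp add: sum_divide_distrib[symmetric] sum.distrib)
  also have "A + ((\<Sum>k<n. x k) + real j * A) / real m = ((\<Sum>i<n. x i) + real (m + j) * A) / real m"
    using mpos by (simp add: field_simps)
  finally have total: "(\<Sum>v\<in>delta_vertices n j m. \<mu> v) = ((\<Sum>i<n. x i) + real (m + j) * A) / real m" .
  have "x = (\<lambda>i. \<Sum>v\<in>delta_vertices n j m. \<mu> v * v i)"
  proof
    fix i
    show "x i = (\<Sum>v\<in>delta_vertices n j m. \<mu> v * v i)"
      unfolding combination_coordinate[OF m j(1)] muJ using muE[of i] mpos supp j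
      by (auto simp: field_simps)
  qed
  then show ?thesis unfolding in_scaled_delta_def using nn total by blast
qed


section \<open>Weights of lattice points\<close>

text \<open>The depth of u: how far the first j coordinates reach below 0.  It is the least admissible
  coefficient A of the vertex -(e_1+...+e_j) in a representation of u.\<close>
definition depth :: "nat \<Rightarrow> (nat \<Rightarrow> int) \<Rightarrow> int" where
  "depth j u = max 0 (- Min (u ` {..<j}))"

lemma depth_nonneg: "depth j u \<ge> 0"
  by (simp add: depth_def)

lemma depth_bound: "i < j \<Longrightarrow> u i + depth j u \<ge> 0"
proof -
  assume "i < j"
  then have "Min (u ` {..<j}) \<le> u i" by (intro Min_le) auto
  then show ?thesis by (simp add: depth_def)
qed

lemma depth_attained: "j \<ge> 1 \<Longrightarrow> depth j u = 0 \<or> (\<exists>i<j. u i = - depth j u)"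
proof -
  assume "j \<ge> 1"
  then have "0 \<in> {..<j}" by simp
  then have "Min (u ` {..<j}) \<in> u ` {..<j}" by (intro Min_in) auto
  then obtain i where "i < j" "u i = Min (u ` {..<j})" by auto
  then show ?thesis by (auto simp: depth_def max_def)
qed

lemma depth_least:
  assumes "j \<ge> 1" "A \<ge> 0" "\<forall>i<j. real_of_int (u i) + A \<ge> 0"
  shows "real_of_int (depth j u) \<le> A"
  using depth_attained[OF assms(1), of u] assms(2,3) by force

lemma depth_eq_iff:
  assumes "j \<ge> 1"
  shows "depth j u = a \<longleftrightarrow> a \<ge> 0 \<and> (\<forall>i<j. u i + a \<ge> 0) \<and> (a = 0 \<or> (\<exists>i<j. u i = -a))"
proof
  assume "depth j u = a"
  then show "a \<ge> 0 \<and> (\<forall>i<j. u i + a \<ge> 0) \<and> (a = 0 \<or> (\<exists>i<j. u i = -a))"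
    using depth_nonneg[of j u] depth_bound[of _ j u] depth_attained[OF assms, of u] by auto
next
  assume a: "a \<ge> 0 \<and> (\<forall>i<j. u i + a \<ge> 0) \<and> (a = 0 \<or> (\<exists>i<j. u i = -a))"
  have "real_of_int (depth j u) \<le> real_of_int a"
    using depth_least[OF assms, of "real_of_int a" u] a by (metis of_int_0_le_iff of_int_add)
  moreover have "a \<le> depth j u" using a depth_nonneg[of j u] depth_bound[of _ j u] by force
  ultimately show "depth j u = a" by simp
qed

text \<open>Lattice points that can lie in some dilate of Delta: supported on the first n
  coordinates and nonnegative on the coordinates j, ..., n-1.\<close>
definition admissible :: "nat \<Rightarrow> nat \<Rightarrow> (nat \<Rightarrow> int) \<Rightarrow> bool" where
  "admissible n j u \<longleftrightarrow> (\<forall>i\<ge>n. u i = 0) \<and> (\<forall>i. j \<le> i \<and> i < n \<longrightarrow> 0 \<le> u i)"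

text \<open>m times the weight of an admissible lattice point.\<close>
definition weight_numerator :: "nat \<Rightarrow> nat \<Rightarrow> nat \<Rightarrow> (nat \<Rightarrow> int) \<Rightarrow> int" where
  "weight_numerator n j m u = (\<Sum>i<n. u i) + int (m + j) * depth j u"

text \<open>An admissible lattice point lies in (weight_numerator u / m) Delta, taking A = depth.\<close>
lemma in_scaled_delta_weight_numerator:
  assumes m: "m \<ge> 1" and j: "1 \<le> j" "j \<le> n" and u: "admissible n j u"
  shows "in_scaled_delta n j m (real_of_int (weight_numerator n j m u) / real m) (\<lambda>i. of_int (u i))"
proof -
  have "\<forall>i<j. 0 \<le> real_of_int (u i) + real_of_int (depth j u)"
    using depth_bound[of _ j u] by (metis of_int_0_le_iff of_int_add)
  from in_scaled_delta_sufficient[OF m j _ this] u depth_nonneg[of j u]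
  show ?thesis by (simp add: admissible_def weight_numerator_def)
qed

text \<open>... and in no smaller dilate, since every feasible A is at least the depth.\<close>
lemma weight_numerator_minimal:
  assumes m: "m \<ge> 1" and j: "1 \<le> j" "j \<le> n"
    and c: "in_scaled_delta n j m c (\<lambda>i. of_int (u i))"
  shows "real_of_int (weight_numerator n j m u) / real m \<le> c"
proof -
  obtain A where A: "A \<ge> 0" "\<forall>i<j. real_of_int (u i) + A \<ge> 0"
    and cA: "c \<ge> ((\<Sum>i<n. real_of_int (u i)) + real (m + j) * A) / real m"
    using in_scaled_delta_necessary[OF m j c] by blast
  have "real_of_int (depth j u) \<le> A" using depth_least[OF j(1) A] .
  then have "real_of_int (weight_numerator n j m u) / real m \<le>
      ((\<Sum>i<n. real_of_int (u i)) + real (m + j) * A) / real m"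
    using m by (simp add: weight_numerator_def divide_right_mono)
  then show ?thesis using cA by simp
qed

lemma has_weight_lattice_iff:
  assumes m: "m \<ge> 1" and j: "1 \<le> j" "j \<le> n" and supp: "\<forall>i\<ge>n. u i = 0"
  shows "has_weight n j m (\<lambda>i. of_int (u i)) (real k / real m) \<longleftrightarrow>
     admissible n j u \<and> weight_numerator n j m u = int k"
proof (cases "admissible n j u")
  case False
  have "\<not> in_scaled_delta n j m c (\<lambda>i. of_int (u i))" for c
  proof
    assume "in_scaled_delta n j m c (\<lambda>i. of_int (u i))"
    from in_scaled_delta_necessary[OF m j this]
    have "\<forall>i. j \<le> i \<and> i < n \<longrightarrow> 0 \<le> u i" by auto
    then show False using False supp by (simp add: admissible_def)
  qed
  then show ?thesis using False unfolding has_weight_def by blast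
next
  case True
  define W where "W = real_of_int (weight_numerator n j m u) / real m"
  have W: "W \<in> \<rat>" "in_scaled_delta n j m W (\<lambda>i. of_int (u i))"
    unfolding W_def using in_scaled_delta_weight_numerator[OF m j True]
    by (auto intro: Rats_divide Rats_of_int Rats_of_nat)
  have W0: "W \<ge> 0" using in_scaled_delta_nonneg[OF W(2)] .
  have "has_weight n j m (\<lambda>i. of_int (u i)) c \<longleftrightarrow> c = W" for c
  proof
    assume c: "has_weight n j m (\<lambda>i. of_int (u i)) c"
    then have "c \<le> W" using W W0 unfolding has_weight_def by blast
    moreover have "W \<le> c"
      using c weight_numerator_minimal[OF m j] unfolding has_weight_def W_def by blast
    ultimately show "c = W" by simp
  next
    assume "c = W"
    then show "has_weight n j m (\<lambda>i. of_int (u i)) c"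
      using W W0 weight_numerator_minimal[OF m j] unfolding has_weight_def W_def by blast
  qed
  moreover have "real k / real m = W \<longleftrightarrow> weight_numerator n j m u = int k"
  proof -
    have "real k / real m = W \<longleftrightarrow> real_of_int (int k) = real_of_int (weight_numerator n j m u)"
      unfolding W_def using m by (simp add: divide_cancel_right)
    also have "\<dots> \<longleftrightarrow> weight_numerator n j m u = int k" by (simp only: of_int_eq_iff eq_commute)
    finally show ?thesis .
  qed
  ultimately show ?thesis using True by auto
qed


section \<open>Decomposition by depth\<close>

definition level_set :: "nat \<Rightarrow> nat \<Rightarrow> nat \<Rightarrow> nat \<Rightarrow> nat \<Rightarrow> (nat \<Rightarrow> int) set" where
  "level_set n j m k a =
     {u. admissible n j u \<and> weight_numerator n j m u = int k \<and> depth j u = int a}"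

definition prefix_bound :: "nat \<Rightarrow> int \<Rightarrow> nat \<Rightarrow> int" where
  "prefix_bound j b i = (if i < j then b else 0)"

lemma sum_prefix_bound: "j \<le> n \<Longrightarrow> sum (prefix_bound j b) {..<n} = int j * b"
  unfolding prefix_bound_def by (rule sum_prefix_const)

lemma lattice_points_prefix_iff:
  assumes "j \<le> n"
  shows "u \<in> lattice_points {..<n} (prefix_bound j b) t \<longleftrightarrow>
     admissible n j u \<and> (\<forall>i<j. b \<le> u i) \<and> (\<Sum>i<n. u i) = t"
  using assms unfolding lattice_points_def admissible_def prefix_bound_def
  by auto

text \<open>Since k <= n m, the depth of a point of weight k/m is at most n: the first j coordinates
  contribute at least -j depth to the sum, so m depth <= k.\<close>
lemma depth_le_of_weight:
  assumes m: "m \<ge> 1" and j: "j \<le> n" and k: "k \<le> n * m"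
    and u: "admissible n j u" "weight_numerator n j m u = int k"
  shows "depth j u \<le> int n"
proof -
  have "- depth j u \<le> u i" if "i < j" for i using depth_bound[OF that, of u] by simp
  then have "(\<Sum>i<n. prefix_bound j (- depth j u) i) \<le> (\<Sum>i<n. u i)"
    using u(1) by (intro sum_mono) (auto simp: prefix_bound_def admissible_def)
  then have "int m * depth j u \<le> int k"
    using u(2) sum_prefix_bound[OF j] by (simp add: weight_numerator_def algebra_simps)
  also have "\<dots> \<le> int m * int n" using k by (simp add: mult.commute flip: of_nat_mult)
  finally show ?thesis using m by simp
qed

lemma weight_set_eq_levels:
  assumes m: "m \<ge> 1" and j: "1 \<le> j" "j \<le> n" and k: "k \<le> n * m"
  shows "{u. (\<forall>i\<ge>n. u i = 0) \<and> has_weight n j m (\<lambda>i. of_int (u i)) (real k / real m)} =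
           (\<Union>a\<in>{0..n}. level_set n j m k a)"
proof -
  have "u \<in> (\<Union>a\<in>{0..n}. level_set n j m k a)"
    if "admissible n j u" "weight_numerator n j m u = int k" for u
  proof -
    have "nat (depth j u) \<in> {0..n}" using depth_le_of_weight[OF m j(2) k that] by simp
    moreover have "u \<in> level_set n j m k (nat (depth j u))"
      using that depth_nonneg[of j u] by (simp add: level_set_def)
    ultimately show ?thesis by blast
  qed
  then show ?thesis
    using has_weight_lattice_iff[OF m j] by (auto simp: level_set_def admissible_def)
qed

lemma level_set_iff:
  "u \<in> level_set n j m k c \<longleftrightarrow>
     admissible n j u \<and> (\<Sum>i<n. u i) = int k - int (m + j) * int c \<and> depth j u = int c"
  by (auto simp: level_set_def weight_numerator_def)

lemma level_set_zero:
  assumes j: "1 \<le> j" "j \<le> n"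
  shows "level_set n j m k 0 = lattice_points {..<n} (prefix_bound j 0) (int k)"
proof -
  have "depth j u = 0 \<longleftrightarrow> (\<forall>i<j. 0 \<le> u i)" for u
    using depth_eq_iff[OF j(1), of u 0] by simp
  then show ?thesis using lattice_points_prefix_iff[OF j(2)] by (auto simp: level_set_iff)
qed

text \<open>At depth a >= 1 the first j coordinates are >= -a with at least one equal to -a:
  the points with all of them >= -a minus those with all of them >= 1 - a.\<close>
lemma level_set_pos:
  assumes j: "1 \<le> j" "j \<le> n" and a: "a \<ge> 1"
  shows "level_set n j m k a =
     lattice_points {..<n} (prefix_bound j (- int a)) (int k - int (m + j) * int a) -
     lattice_points {..<n} (prefix_bound j (1 - int a)) (int k - int (m + j) * int a)"
proof -
  have "depth j u = int a \<longleftrightarrow> (\<forall>i<j. - int a \<le> u i) \<and> \<not> (\<forall>i<j. 1 - int a \<le> u i)" for u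
    using depth_eq_iff[OF j(1), of u "int a"] a by (auto simp: not_le) force+
  then show ?thesis using lattice_points_prefix_iff[OF j(2)] by (auto simp: level_set_iff)
qed

lemma card_level_set_zero:
  assumes n: "n \<ge> 1" and j: "1 \<le> j" "j \<le> n"
  shows "finite (level_set n j m k 0) \<and>
     int (card (level_set n j m k 0)) = binom (int n - 1 + int k) (int n - 1)"
proof -
  have "0 \<in> {..<n}" using n by simp
  then have "{..<n} \<noteq> {}" by blast
  from lattice_points_count[OF finite_lessThan this, of "prefix_bound j 0" "int k"]
  show ?thesis unfolding level_set_zero[OF j] sum_prefix_bound[OF j(2)] by (simp add: algebra_simps)
qed

text \<open>The count at depth a >= 1: a difference of two simplex counts with T = k - a m,
  evaluated by the binomial identity.\<close>
lemma card_level_set_pos: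
  fixes n m j k a :: nat
  assumes n: "n \<ge> 1" and j: "1 \<le> j" "j \<le> n" and a: "a \<ge> 1"
  defines "T \<equiv> int k - int a * int m"
  shows "finite (level_set n j m k a) \<and> int (card (level_set n j m k a)) =
      (\<Sum>s=1..j. beta n j s * binom (T + (int n - int j - 1)) (int n - int s - 1))
      + (if j = n \<and> T = 0 then 1 else 0)"
proof -
  define t where "t = int k - int (m + j) * int a"
  define L where "L b = lattice_points {..<n} (prefix_bound j b) t" for b
  have "0 \<in> {..<n}" using n by simp
  then have "{..<n} \<noteq> {}" by blast
  note count = lattice_points_count[OF finite_lessThan this, of "prefix_bound j _" t,
      unfolded sum_prefix_bound[OF j(2)]]
  have outer: "finite (L (- int a))" "int (card (L (- int a))) = binom (T + int n - 1) (int n - 1)"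
    using count[of "- int a"] unfolding L_def t_def T_def by (simp_all add: algebra_simps)
  have inner: "int (card (L (1 - int a))) = binom (T - int j + int n - 1) (int n - 1)"
    using count[of "1 - int a"] unfolding L_def t_def T_def by (simp add: algebra_simps)
  have sub: "L (1 - int a) \<subseteq> L (- int a)"
    by (force simp: L_def lattice_points_prefix_iff[OF j(2)])
  have "int (card (level_set n j m k a)) = int (card (L (- int a))) - int (card (L (1 - int a)))"
    unfolding level_set_pos[OF j a] L_def[symmetric] t_def[symmetric]
    using card_Diff_subset[OF finite_subset[OF sub outer(1)] sub] card_mono[OF outer(1) sub]
    by (simp add: of_nat_diff)
  also have "\<dots> = binom (T + int n - 1) (int n - 1) - binom (T - int j + int n - 1) (int n - 1)"
    using outer inner by simp
  also have "\<dots> = (\<Sum>s=1..j. beta n j s * binom (T + (int n - int j - 1)) (int n - int s - 1))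
      + (if j = n \<and> T = 0 then 1 else 0)" by (rule binom_difference_vandermonde[OF n j])
  finally show ?thesis
    unfolding level_set_pos[OF j a] L_def[symmetric] t_def[symmetric] using outer(1) by simp
qed

lemma W_Delta_level_sum:
  assumes n: "n \<ge> 1" and m: "m \<ge> 1" and j: "1 \<le> j" "j \<le> n" and k: "k \<le> n * m"
  shows "int (W_Delta n j m k) = (\<Sum>a\<in>{0..n}. int (card (level_set n j m k a)))"
proof -
  have fin: "finite (level_set n j m k a)" for a
    using card_level_set_zero[OF n j] card_level_set_pos[OF n j] by (cases "a = 0") auto
  have disj: "\<forall>a\<in>{0..n}. \<forall>b\<in>{0..n}. a \<noteq> b \<longrightarrow>
      level_set n j m k a \<inter> level_set n j m k b = {}"
    by (auto simp: level_set_def)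
  have "card (\<Union>a\<in>{0..n}. level_set n j m k a) = (\<Sum>a\<in>{0..n}. card (level_set n j m k a))"
    using fin disj by (intro card_UN_disjoint) auto
  then show ?thesis
    unfolding W_Delta_def weight_set_eq_levels[OF m j k] by (simp add: of_nat_sum)
qed

text \<open>The correction terms over a = 1..n add up to alpha: k = a m for exactly one such a iff
  k is a positive multiple of m (using k <= n m).\<close>
lemma alpha_as_sum:
  assumes m: "m \<ge> 1" and k: "k \<le> n * m"
  shows "(\<Sum>a=1..n. (if j = n \<and> int k - int a * int m = 0 then 1 else 0)) = alpha n m j k"
proof -
  have "int k - int a * int m = 0 \<longleftrightarrow> k = a * m" for a
    by (simp flip: of_nat_mult)
  then have "(\<Sum>a=1..n. (if j = n \<and> int k - int a * int m = 0 then 1 else 0)) =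
      (\<Sum>a\<in>{1..n}. if j = n \<and> k = a * m then 1 else (0::int))" by simp
  also have "\<dots> = alpha n m j k"
  proof (cases "j = n \<and> 0 < k \<and> m dvd k")
    case True
    then obtain q where q: "k = q * m" by (auto elim: dvdE simp: mult.commute)
    have "q \<in> {1..n}" using True q k m by (auto simp: mult.commute)
    moreover have "k = a * m \<longleftrightarrow> a = q" for a using q m by auto
    ultimately show ?thesis using True by (simp add: alpha_def sum.delta')
  next
    case False
    then have "\<not> (j = n \<and> k = a * m)" if "a \<in> {1..n}" for a using that m by auto
    then have "(\<Sum>a\<in>{1..n}. if j = n \<and> k = a * m then 1 else (0::int)) = 0"
      by (intro sum.neutral) auto
    then show ?thesis using False by (simp add: alpha_def)
  qed
  finally show ?thesis .
qed


theorem proposition4p6: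
  fixes n m j k :: nat
  assumes "n \<ge> 1" and "m \<ge> 1" and "1 \<le> j" and "j \<le> n" and "k \<le> n * m"
  shows "int (W_Delta n j m k) =
           binom (int n - 1 + int k) (int n - 1)
         + (\<Sum>s=1..j. beta n j s *
              (\<Sum>l=1..n. binom (int k - int l * int m + (int n - int j - 1)) (int n - int s - 1)))
         + alpha n m j k"
proof -
  note n = assms(1) and m = assms(2) and j = assms(3,4) and k = assms(5)
  have "{0..n} = insert 0 {1..n}" by auto
  then have "int (W_Delta n j m k) =
      int (card (level_set n j m k 0)) + (\<Sum>a=1..n. int (card (level_set n j m k a)))"
    using W_Delta_level_sum[OF n m j k] by simp
  also have "(\<Sum>a=1..n. int (card (level_set n j m k a))) =
      (\<Sum>a=1..n. \<Sum>s=1..j. beta n j s *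
          binom (int k - int a * int m + (int n - int j - 1)) (int n - int s - 1))
      + (\<Sum>a=1..n. if j = n \<and> int k - int a * int m = 0 then 1 else 0)"
    using card_level_set_pos[OF n j] by (simp add: sum.distrib)
  also have "\<dots> = (\<Sum>s=1..j. beta n j s *
          (\<Sum>l=1..n. binom (int k - int l * int m + (int n - int j - 1)) (int n - int s - 1)))
      + alpha n m j k"
    unfolding alpha_as_sum[OF m k] sum_distrib_left by (subst sum.swap) (rule refl)
  finally show ?thesis using card_level_set_zero[OF n j] by simp
qed

end
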